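(* Let $(a_n)_{n\ge 0}$ and $(b_n)_{n\ge 0}$ be two sequences of nonnegative real numbers, and let $\alpha_0,\beta\in(0,1)$ be such that for every $\alpha\in(0,\alpha_0)$ the inequality $$a_{n+1}+b_{n+1}\le (1-2\alpha)a_n+\alpha a_{n-1}+\beta b_n$$ holds for all $n\ge 1$. Then there exist $\gamma\in(0,1)$ and $M>0$ such that $a_n\le \gamma^n M$ for every $n>0$. *)

theory Defs
  imports Complex_Main
begin

end

theory Submission
  imports Defs
begin

text \<open>
  For a fixed admissible \<open>\<alpha>\<close> the Lyapunov function
  \<open>V n = a n + b n + c * a (n - 1)\<close> with \<open>c = \<alpha> / r\<close> and
  \<open>r = max \<beta> (1 - \<alpha>/2)\<close> contracts by the factor \<open>r < 1\<close>:
  the weight \<open>c\<close> absorbs the delayed term \<open>\<alpha> * a (n - 1)\<close>, and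
  \<open>1 - 2\<alpha> + \<alpha>/r \<le> r\<close> because \<open>r\<close> is at least \<open>1 - \<alpha>/2\<close>.
  Hence \<open>V\<close>, and with it \<open>a\<close>, decays geometrically.
\<close>

lemma geometric_decay_from:
  fixes V :: "nat \<Rightarrow> real"
  assumes step: "\<And>k. m \<le> k \<Longrightarrow> V (Suc k) \<le> r * V k" and "0 \<le> r" and "m \<le> n"
  shows "V n \<le> r ^ (n - m) * V m"
  using \<open>m \<le> n\<close>
proof (induction n rule: dec_induct)
  case base
  then show ?case by simp
next
  case (step k)
  have "V (Suc k) \<le> r * V k" using step.hyps(1) by (rule assms(1))
  also have "\<dots> \<le> r * (r ^ (k - m) * V m)"
    using step.IH \<open>0 \<le> r\<close> by (rule mult_left_mono)
  also have "\<dots> = r ^ (Suc k - m) * V m"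
    using step.hyps(1) by (simp add: Suc_diff_le)
  finally show ?case .
qed

lemma contraction_rate_bound:
  fixes \<alpha> r :: real
  assumes "0 < \<alpha>" "\<alpha> \<le> 1/2" "1 - \<alpha>/2 \<le> r" "r \<le> 1"
  shows "1 - 2 * \<alpha> + \<alpha> / r \<le> r"
proof -
  have "r > 0" using assms by linarith
  \<comment> \<open>\<open>r * r - (1 - 2\<alpha>) * r - \<alpha> = (r - 1) * (r + 2\<alpha>) + \<alpha>\<close>, and \<open>r - 1 \<ge> -\<alpha>/2\<close>\<close>
  have "(r - 1) * (r + 2 * \<alpha>) \<ge> - \<alpha>/2 * (r + 2 * \<alpha>)"
    using assms by (intro mult_right_mono) auto
  moreover have "- \<alpha>/2 * (r + 2 * \<alpha>) \<ge> - \<alpha>/2 * (1 + 2 * \<alpha>)"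
    using assms by (intro mult_left_mono_neg) auto
  moreover have "\<alpha> * \<alpha> \<le> \<alpha> / 2"
    using assms by (metis mult_left_mono less_imp_le mult.right_neutral times_divide_eq_right)
  ultimately have "(1 - 2 * \<alpha>) * r + \<alpha> \<le> r * r"
    by (simp add: algebra_simps)
  then show ?thesis
    using \<open>r > 0\<close> by (simp add: field_simps)
qed

lemma two_step_recurrence_geometric_decay:
  fixes a b :: "nat \<Rightarrow> real" and \<alpha> \<beta> :: real
  assumes a_nonneg: "\<And>n. a n \<ge> 0" and b_nonneg: "\<And>n. b n \<ge> 0"
    and \<alpha>: "0 < \<alpha>" "\<alpha> \<le> 1/2" and "\<beta> < 1"
    and rec: "\<And>n. n \<ge> 1 \<Longrightarrow>
               a (n + 1) + b (n + 1) \<le> (1 - 2 * \<alpha>) * a n + \<alpha> * a (n - 1) + \<beta> * b n"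
  shows "\<exists>\<gamma> M. 0 < \<gamma> \<and> \<gamma> < 1 \<and> M > 0 \<and> (\<forall>n>0. a n \<le> \<gamma> ^ n * M)"
proof -
  define r where "r = max \<beta> (1 - \<alpha>/2)"
  have r: "\<beta> \<le> r" "0 < r" "r < 1" using \<alpha> \<open>\<beta> < 1\<close> by (auto simp: r_def)
  define c where "c = \<alpha> / r"
  have c: "c > 0" "r * c = \<alpha>" using \<alpha> r by (auto simp: c_def)
  have rate: "1 - 2 * \<alpha> + c \<le> r"
    unfolding c_def using \<alpha> r by (intro contraction_rate_bound) (auto simp: r_def)
  define V where "V n = a n + b n + c * a (n - 1)" for n
  have V_step: "V (Suc n) \<le> r * V n" if "1 \<le> n" for n
  proof -
    have "V (Suc n) \<le> (1 - 2 * \<alpha> + c) * a n + \<alpha> * a (n - 1) + \<beta> * b n"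
      using rec[OF that] by (simp add: V_def algebra_simps)
    also have "\<dots> \<le> r * a n + (r * c) * a (n - 1) + r * b n"
      using rate r c a_nonneg b_nonneg by (intro add_mono mult_right_mono) auto
    also have "\<dots> = r * V n" by (simp add: V_def algebra_simps)
    finally show ?thesis .
  qed
  define M where "M = V 1 / r + 1"
  have "V 1 \<ge> 0" using a_nonneg b_nonneg c(1) by (simp add: V_def)
  then have "M > 0" using r by (simp add: M_def add_nonneg_pos)
  have "a n \<le> r ^ n * M" if "n > 0" for n
  proof -
    have "a n \<le> V n" using a_nonneg b_nonneg c(1) by (simp add: V_def)
    also have "\<dots> \<le> r ^ (n - 1) * V 1"
      using V_step r that by (intro geometric_decay_from) auto
    also have "\<dots> = r ^ n * (V 1 / r)"
      using that r by (simp add: power_eq_if)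
    also have "\<dots> \<le> r ^ n * M" using r by (intro mult_left_mono) (auto simp: M_def)
    finally show ?thesis .
  qed
  with r \<open>M > 0\<close> show ?thesis by blast
qed

theorem lemma2p8:
  fixes a b :: "nat \<Rightarrow> real" and \<alpha>\<^sub>0 \<beta> :: real
  assumes a_nonneg: "\<And>n. a n \<ge> 0"
    and b_nonneg: "\<And>n. b n \<ge> 0"
    and alpha0: "0 < \<alpha>\<^sub>0" "\<alpha>\<^sub>0 < 1"
    and beta: "0 < \<beta>" "\<beta> < 1"
    and rec: "\<And>\<alpha> n. 0 < \<alpha> \<Longrightarrow> \<alpha> < \<alpha>\<^sub>0 \<Longrightarrow> n \<ge> 1 \<Longrightarrow>
               a (n + 1) + b (n + 1) \<le> (1 - 2 * \<alpha>) * a n + \<alpha> * a (n - 1) + \<beta> * b n"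
  shows "\<exists>\<gamma> M. 0 < \<gamma> \<and> \<gamma> < 1 \<and> M > 0 \<and> (\<forall>n>0. a n \<le> \<gamma> ^ n * M)"
proof (rule two_step_recurrence_geometric_decay[OF a_nonneg b_nonneg _ _ beta(2)])
  show "0 < \<alpha>\<^sub>0 / 2" "\<alpha>\<^sub>0 / 2 \<le> 1/2" using alpha0 by auto
  show "a (n + 1) + b (n + 1) \<le> (1 - 2 * (\<alpha>\<^sub>0 / 2)) * a n + \<alpha>\<^sub>0 / 2 * a (n - 1) + \<beta> * b n"
    if "n \<ge> 1" for n
    using rec[of "\<alpha>\<^sub>0 / 2"] alpha0 that by simp
qed

end
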